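(* Consider $P(\omega)$ with the Michael topology. Assume that $[\omega]^{<\omega}\subseteq Y\subseteq P(\omega)$, $Y$ is countable, and $\mathcal{U}$ is a family of open subsets of $P(\omega)$ such that each finite subset of $Y$ is included in some member of $\mathcal{U}$. Then there are natural numbers $m_0<m_1<\cdots$ and (not necessarily distinct) $U_0,U_1,\ldots\in\mathcal{U}$ such that: (1) for each $y\in Y$, $y\in U_n$ for all but finitely many $n$; (2) for each $x\subseteq\omega$ and each $n$, if $x\cap(m_n,m_{n+1})=\emptyset$ then $x\in U_n$.
   Context: $P(\omega)$ is identified with the Cantor space $2^\omega$ via characteristic functions; this gives the Cantor topology on $P(\omega)$, with basic open sets $[s,n]=\{x\in P(\omega): x\cap\{0,\dots,n-1\}=s\}$ for $n\in\omega$, $s\subseteq\{0,\dots,n-1\}$. The Michael topology on $P(\omega)$ is the finer topology obtained from the Cantor topology by additionally declaring every infinite subset of $\omega$ (every element of $[\omega]^\omega$) to be an isolated point. $[\omega]^{<\omega}$ denotes the set of finite subsets of $\omega$. For natural numbers $a<b$, $(a,b)=\{k\in\omega : a<k<b\}$. *)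

theory Defs
  imports "HOL-Analysis.Analysis"
begin

definition cantor_basic :: "nat \<Rightarrow> nat set \<Rightarrow> nat set set" where
  "cantor_basic n s = {x. x \<inter> {0..<n} = s}"

definition cantor_basis :: "nat set set set" where
  "cantor_basis = {cantor_basic n s | n s. s \<subseteq> {0..<n}}"

definition cantor_topology :: "nat set topology" where
  "cantor_topology = topology_generated_by cantor_basis"

definition michael_topology :: "nat set topology" where
  "michael_topology = topology_generated_by (cantor_basis \<union> {{x} | x. infinite x})"

end

theory Submission
  imports Defs
begin

text \<open>
  As \<open>Pow {..k}\<close> is finite, one
  cylinder length \<open>M\<close> works for all subsets of \<open>{..k}\<close> at once, so an open set containing
  \<open>Pow {..k}\<close> contains every \<open>x\<close> missing the interval \<open>(k, M)\<close>: such an \<open>x\<close> agrees below \<open>M\<close>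
  with its own initial segment \<open>x \<inter> {..k}\<close>. Enumerating \<open>Y\<close> as \<open>e 0, e 1, \<dots>\<close> and choosing
  \<open>U\<^sub>n\<close> to cover \<open>e ` {..n} \<union> Pow {..m\<^sub>n}\<close> then yields the sequences recursively.
\<close>

definition cylinder :: "nat set \<Rightarrow> nat \<Rightarrow> nat set set" where
  "cylinder s k = {x. x \<inter> {..<k} = s \<inter> {..<k}}"

lemma cylinder_antimono:
  assumes "k \<le> k'"
  shows "cylinder s k' \<subseteq> cylinder s k"
proof
  fix x
  assume "x \<in> cylinder s k'"
  then have "x \<inter> {..<k'} \<inter> {..<k} = s \<inter> {..<k'} \<inter> {..<k}"
    by (simp add: cylinder_def)
  moreover have "{..<k'} \<inter> {..<k} = {..<k}"
    using assms by auto
  ultimately show "x \<in> cylinder s k"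
    by (simp add: cylinder_def Int_assoc)
qed

lemma cylinder_cantor_basic: "s \<in> cantor_basic n r \<Longrightarrow> cylinder s n \<subseteq> cantor_basic n r"
  unfolding cylinder_def cantor_basic_def by (simp add: atLeast0LessThan)

lemma michael_open_eventually_cylinder:
  assumes "openin michael_topology U" "finite s" "s \<in> U"
  shows "\<forall>\<^sub>F k in sequentially. cylinder s k \<subseteq> U"
proof -
  have "generate_topology_on (cantor_basis \<union> {{x} | x. infinite x}) U"
    using assms(1) by (simp add: michael_topology_def openin_topology_generated_by_iff)
  then show ?thesis
    using assms(2,3)
  proof (induction rule: generate_topology_on.induct)
    case Empty
    then show ?case by simp
  next
    case (Int a b)
    then have "\<forall>\<^sub>F k in sequentially. cylinder s k \<subseteq> a"
      and "\<forall>\<^sub>F k in sequentially. cylinder s k \<subseteq> b"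
      by simp_all
    then show ?case
      by (rule eventually_elim2) simp
  next
    case (UN K)
    then obtain V where "V \<in> K" "s \<in> V"
      by blast
    with UN.IH UN.prems have "\<forall>\<^sub>F k in sequentially. cylinder s k \<subseteq> V"
      by blast
    then show ?case
      by (rule eventually_mono) (use \<open>V \<in> K\<close> in blast)
  next
    case (Basis t)
    then obtain n r where t: "t = cantor_basic n r"
      unfolding cantor_basis_def by blast
    have "cylinder s k \<subseteq> t" if "k \<ge> n" for k
      using cylinder_antimono[OF that] cylinder_cantor_basic[of s n r] Basis.prems t by blast
    then show ?case
      unfolding eventually_sequentially by blast
  qed
qed

lemma cylinder_initial_segment:
  assumes "x \<inter> {k<..<M} = {}"
  shows "x \<in> cylinder (x \<inter> {..k}) M"
proof -
  have "x \<inter> {..<M} \<subseteq> {..k}"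
  proof
    fix i
    assume i: "i \<in> x \<inter> {..<M}"
    show "i \<in> {..k}"
    proof (rule ccontr)
      assume "i \<notin> {..k}"
      with i have "i \<in> x \<inter> {k<..<M}"
        by simp
      with assms show False
        by blast
    qed
  qed
  then show ?thesis
    unfolding cylinder_def by blast
qed

lemma michael_open_contains_gap:
  assumes "openin michael_topology U" "Pow {..k} \<subseteq> U"
  obtains M where "k < M" "\<And>x. x \<inter> {k<..<M} = {} \<Longrightarrow> x \<in> U"
proof -
  have "\<forall>s \<in> Pow {..k}. \<forall>\<^sub>F M in sequentially. cylinder s M \<subseteq> U"
  proof
    fix s
    assume s: "s \<in> Pow {..k}"
    show "\<forall>\<^sub>F M in sequentially. cylinder s M \<subseteq> U"
    proof (rule michael_open_eventually_cylinder[OF assms(1)])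
      show "finite s"
        using s finite_subset[OF _ finite_atMost] by blast
      show "s \<in> U"
        using s assms(2) by blast
    qed
  qed
  then have "\<forall>\<^sub>F M in sequentially. \<forall>s \<in> Pow {..k}. cylinder s M \<subseteq> U"
    by (rule eventually_ball_finite[rotated]) simp
  then have "\<exists>M. k < M \<and> (\<forall>s \<in> Pow {..k}. cylinder s M \<subseteq> U)"
    by (intro eventually_happens'[OF sequentially_bot] eventually_conj eventually_gt_at_top)
  then obtain M where M: "k < M" "\<forall>s \<in> Pow {..k}. cylinder s M \<subseteq> U"
    by blast
  show thesis
  proof (rule that[OF M(1)])
    fix x
    assume "x \<inter> {k<..<M} = {}"
    then have "x \<in> cylinder (x \<inter> {..k}) M"
      by (rule cylinder_initial_segment)
    with M(2) show "x \<in> U"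
      by blast
  qed
qed

lemma michael_cover_with_gap:
  assumes "{x. finite x} \<subseteq> Y"
    and "\<forall>U\<in>\<U>. openin michael_topology U"
    and "\<forall>F. finite F \<and> F \<subseteq> Y \<longrightarrow> (\<exists>U\<in>\<U>. F \<subseteq> U)"
    and "finite F" "F \<subseteq> Y"
  obtains U M where "U \<in> \<U>" "F \<subseteq> U" "k < M" "\<And>x. x \<inter> {k<..<M} = {} \<Longrightarrow> x \<in> U"
proof -
  have "finite (F \<union> Pow {..k})"
    using assms(4) by simp
  moreover have "F \<union> Pow {..k} \<subseteq> Y"
    using assms(1,5) finite_subset[OF _ finite_atMost] by blast
  ultimately obtain U where U: "U \<in> \<U>" "F \<subseteq> U" "Pow {..k} \<subseteq> U"
    using assms(3) by (meson le_sup_iff)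
  moreover obtain M where "k < M" "\<And>x. x \<inter> {k<..<M} = {} \<Longrightarrow> x \<in> U"
    using assms(2) U by (meson michael_open_contains_gap)
  ultimately show thesis
    using that by blast
qed

theorem lemma4p5:
  fixes Y :: "nat set set" and \<U> :: "nat set set set"
  assumes "{x. finite x} \<subseteq> Y"
    and "countable Y"
    and "\<forall>U\<in>\<U>. openin michael_topology U"
    and "\<forall>F. finite F \<and> F \<subseteq> Y \<longrightarrow> (\<exists>U\<in>\<U>. F \<subseteq> U)"
  shows "\<exists>m :: nat \<Rightarrow> nat. \<exists>Us :: nat \<Rightarrow> nat set set.
           strict_mono m \<and> (\<forall>n. Us n \<in> \<U>)
         \<and> (\<forall>y\<in>Y. finite {n. y \<notin> Us n})
         \<and> (\<forall>x n. x \<inter> {m n<..<m (Suc n)} = {} \<longrightarrow> x \<in> Us n)"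
proof -
  define e where "e = from_nat_into Y"
  have "{} \<in> Y"
    using assms(1) by blast
  then have Y: "Y = range e"
    using assms(2) unfolding e_def by (metis empty_iff range_from_nat_into)
  have "\<exists>U M. U \<in> \<U> \<and> e ` {..n} \<subseteq> U \<and> k < M \<and> (\<forall>x. x \<inter> {k<..<M} = {} \<longrightarrow> x \<in> U)" for n k
  proof (rule michael_cover_with_gap[OF assms(1,3,4)])
    show "finite (e ` {..n})"
      by simp
    show "e ` {..n} \<subseteq> Y"
      using Y by blast
  qed blast
  then obtain UU MM where UM: "\<And>n k. UU n k \<in> \<U>" "\<And>n k. e ` {..n} \<subseteq> UU n k"
    "\<And>n k. k < MM n k" "\<And>n k x. x \<inter> {k<..<MM n k} = {} \<Longrightarrow> x \<in> UU n k"
    by metis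
  define m where "m = rec_nat 0 MM"
  have m_Suc: "m (Suc n) = MM n (m n)" for n
    by (simp add: m_def)
  define Us where "Us n = UU n (m n)" for n
  have "e i \<in> Us n" if "i \<le> n" for i n
    unfolding Us_def using UM(2)[of n "m n"] that by blast
  then have "{n. e i \<notin> Us n} \<subseteq> {..<i}" for i
    by (auto simp flip: not_le)
  then have "finite {n. e i \<notin> Us n}" for i
    by (meson finite_lessThan finite_subset)
  then have "\<forall>y\<in>Y. finite {n. y \<notin> Us n}"
    using Y by blast
  moreover have "strict_mono m"
    by (rule strict_monoI_Suc) (simp add: m_Suc UM(3))
  moreover have "\<forall>n. Us n \<in> \<U>"
    by (simp add: Us_def UM(1))
  moreover have "\<forall>x n. x \<inter> {m n<..<m (Suc n)} = {} \<longrightarrow> x \<in> Us n"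
    by (simp add: Us_def m_Suc UM(4))
  ultimately show ?thesis
    by (intro exI[of _ m] exI[of _ Us]) blast
qed

end
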